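(* Let $(G_x)$ be the coclass family defined by $\eta\in H^3(P,T)$, $x\in\mathbb{N}_0$, and let $A = C_{L,x}(\gamma)\times O$ and $B$ be objects of $\mathcal{A}_p(G_x)$, where $L\in\mathcal{L}_\eta$, $\gamma\in Z^1(L,M_x)$, $O\in\mathcal{O}_x(L)$. Let $g=(w,m)$ and $g'=(w,m')$ be two elements of $G_x$ that each induce a morphism in $\mathrm{Hom}(A,B)$. Then $g$ and $g'$ induce the same morphism in $\mathrm{Hom}(A,B)$ if and only if $m-m'\in C_{M_x}(L)^w$, where $C_{M_x}(L)=\{n\in M_x\mid [n,l]=0 \text{ for all } l\in L\}$.
   Context: Conventions: normalised cocycles $Z^n$, coboundaries $B^n$, cohomology $H^n$ for right modules written additively; $\mathrm{Ext}(\tau)$ is $G\times M$ with $(g,m)(h,n)=(gh,m^h+n+\tau(g,h))$; for $n \in M_x$, $l\in P$, $[n,l] = n^l - n$. Setting: $S$ infinite pro-$p$-group of finite coclass; $T=\gamma_\ell(S)$ ($\ell$ large), $T\cong\mathbb{Z}_p^d$, $P=S/T$ finite, $|P|=p^m$ (here $m$ is only the exponent of $|P|$ in the definition of $e$), the series $T_0=T$, $T_{i+1}=[T_i,S]$ with all indices $p$; $T$ an additive $P$-module via conjugation; $S=\mathrm{Ext}(\rho)$, $\rho\in Z^2(P,T)$. $\mathcal{L}$ = elementary abelian $L\leq P$ with $\rho_L\in B^2(L,T)$; $\mathcal{L}_\eta=\{L\in\mathcal{L}\mid\mathrm{res}^P_L(\eta)=0\in H^3(L,T)\}$. Coclass family: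 $e=3\log_p|P|$, $M_x=T/p^{x+e}T$; $pro_x: Z^2(P,T)\to Z^2(P,M_x)$ induced by projection with image $I^2(P,M_x)$; $J^2(P,M_x)$ image of $Z^2(P,p^{x+e-\log_p|P|}T/p^{x+e}T)\to Z^2(P,M_x)$ induced by inclusion; fixed complements $K^2(P,M_x)\leq J^2(P,M_x)$ of $I^2(P,M_x)$ in $Z^2(P,M_x)$ with $mul(K^2(P,M_x))=K^2(P,M_{x+1})$ ($mul$ induced by $t+p^{x+e}T\mapsto pt+p^{x+e+1}T$). The composite $Z^2(P,M_x)\to H^2(P,M_x)\to H^3(P,p^{x+e}T)\to H^3(P,T)$ (quotient, connecting map, division by $p^{x+e}$) restricts to an isomorphism on $K^2(P,M_x)$; $\eta_x$ is the preimage of $\eta$, $\rho_x=pro_x(\rho)$, $G_x=\mathrm{Ext}(\rho_x+\eta_x)$, $M_x=\{(1,m)\}$. For $L\in\mathcal{L}_\eta$, a complement $C_{L,x}=\{(l,t_{L,x}(l))\}$ to $M_x$ in the full preimage of $L$ in $G_x$ is fixed, and $C_{L,x}(\gamma)=\{(l,t_{L,x}(l)+\gamma(l))\}$ for $\gamma\in Z^1(L,M_x)$. $\mathcal{O}_x(L)$ is the set of elementary abelian subgroups of $M_x$ centralised by $L$. $\mathcal{A}_p(G_x)$ is the Quillen category: objects elementary abelian $p$-subgroups, morphisms $E\to F$ the maps $e\mapsto e^g$ with $g\in G_x$, $E^g\leq F$. *)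

theory Defs
  imports "HOL-Algebra.Algebra"
begin

text \<open>Right P-module structure on an additive abelian group 'm; act m g stands for m^g.\<close>
definition right_module :: "('p,'a) monoid_scheme \<Rightarrow> ('m::ab_group_add \<Rightarrow> 'p \<Rightarrow> 'm) \<Rightarrow> bool" where
  "right_module P act \<longleftrightarrow>
     (\<forall>m. act m \<one>\<^bsub>P\<^esub> = m) \<and>
     (\<forall>m g h. g \<in> carrier P \<longrightarrow> h \<in> carrier P \<longrightarrow> act (act m g) h = act m (g \<otimes>\<^bsub>P\<^esub> h)) \<and>
     (\<forall>m n g. g \<in> carrier P \<longrightarrow> act (m + n) g = act m g + act n g)"

definition normalised_2cocycle :: "('p,'a) monoid_scheme \<Rightarrow> ('m::ab_group_add \<Rightarrow> 'p \<Rightarrow> 'm) \<Rightarrow> ('p \<Rightarrow> 'p \<Rightarrow> 'm) \<Rightarrow> bool" where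
  "normalised_2cocycle P act \<tau> \<longleftrightarrow>
     (\<forall>h\<in>carrier P. \<tau> \<one>\<^bsub>P\<^esub> h = 0) \<and> (\<forall>g\<in>carrier P. \<tau> g \<one>\<^bsub>P\<^esub> = 0) \<and>
     (\<forall>g\<in>carrier P. \<forall>h\<in>carrier P. \<forall>k\<in>carrier P.
        act (\<tau> g h) k + \<tau> (g \<otimes>\<^bsub>P\<^esub> h) k = \<tau> g (h \<otimes>\<^bsub>P\<^esub> k) + \<tau> h k)"

definition normalised_1cocycle :: "('p,'a) monoid_scheme \<Rightarrow> 'p set \<Rightarrow> ('m::ab_group_add \<Rightarrow> 'p \<Rightarrow> 'm) \<Rightarrow> ('p \<Rightarrow> 'm) \<Rightarrow> bool" where
  "normalised_1cocycle P L act \<gamma> \<longleftrightarrow>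
     \<gamma> \<one>\<^bsub>P\<^esub> = 0 \<and> (\<forall>l\<in>L. \<forall>k\<in>L. \<gamma> (l \<otimes>\<^bsub>P\<^esub> k) = act (\<gamma> l) k + \<gamma> k)"

definition Ext :: "('p,'a) monoid_scheme \<Rightarrow> ('m::ab_group_add \<Rightarrow> 'p \<Rightarrow> 'm) \<Rightarrow> ('p \<Rightarrow> 'p \<Rightarrow> 'm) \<Rightarrow> ('p \<times> 'm) monoid" where
  "Ext P act \<tau> = \<lparr>carrier = carrier P \<times> UNIV,
      monoid.mult = (\<lambda>(g,m) (h,n). (g \<otimes>\<^bsub>P\<^esub> h, act m h + n + \<tau> g h)),
      monoid.one = (\<one>\<^bsub>P\<^esub>, 0)\<rparr>"

definition elem_ab_subgroup :: "nat \<Rightarrow> ('g,'b) monoid_scheme \<Rightarrow> 'g set \<Rightarrow> bool" where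
  "elem_ab_subgroup p G E \<longleftrightarrow> subgroup E G \<and>
     (\<forall>x\<in>E. \<forall>y\<in>E. x \<otimes>\<^bsub>G\<^esub> y = y \<otimes>\<^bsub>G\<^esub> x) \<and> (\<forall>x\<in>E. x [^]\<^bsub>G\<^esub> p = \<one>\<^bsub>G\<^esub>)"

definition quillen_obj :: "nat \<Rightarrow> ('g,'b) monoid_scheme \<Rightarrow> 'g set \<Rightarrow> bool" where
  "quillen_obj p G E \<longleftrightarrow> elem_ab_subgroup p G E \<and> E \<noteq> {\<one>\<^bsub>G\<^esub>}"

definition elem_ab_add :: "nat \<Rightarrow> ('m::ab_group_add) set \<Rightarrow> bool" where
  "elem_ab_add p Ob \<longleftrightarrow> 0 \<in> Ob \<and> (\<forall>a\<in>Ob. \<forall>b\<in>Ob. a + b \<in> Ob) \<and> (\<forall>a\<in>Ob. - a \<in> Ob) \<and>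
     (\<forall>a\<in>Ob. ((+) a ^^ p) 0 = 0)"

definition calO :: "nat \<Rightarrow> 'p set \<Rightarrow> ('m::ab_group_add \<Rightarrow> 'p \<Rightarrow> 'm) \<Rightarrow> 'm set set" where
  "calO p L act = {Ob. elem_ab_add p Ob \<and> (\<forall>n\<in>Ob. \<forall>l\<in>L. act n l = n)}"

definition bracket :: "('m::ab_group_add \<Rightarrow> 'p \<Rightarrow> 'm) \<Rightarrow> 'm \<Rightarrow> 'p \<Rightarrow> 'm" where
  "bracket act n l = act n l - n"

definition centraliser_M :: "'p set \<Rightarrow> ('m::ab_group_add \<Rightarrow> 'p \<Rightarrow> 'm) \<Rightarrow> 'm set" where
  "centraliser_M L act = {n. \<forall>l\<in>L. bracket act n l = 0}"

text \<open>C_{L}(gamma) = {(l, t(l)+gamma(l))}; the fixed complement is C_gamma with gamma = 0.\<close>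
definition C_gamma :: "'p set \<Rightarrow> ('p \<Rightarrow> 'm::ab_group_add) \<Rightarrow> ('p \<Rightarrow> 'm) \<Rightarrow> ('p \<times> 'm) set" where
  "C_gamma L t \<gamma> = {(l, t l + \<gamma> l) | l. l \<in> L}"

definition embM :: "('p,'a) monoid_scheme \<Rightarrow> 'm set \<Rightarrow> ('p \<times> 'm) set" where
  "embM P Ob = {(\<one>\<^bsub>P\<^esub>, n) | n. n \<in> Ob}"

definition induces_morphism :: "('g,'b) monoid_scheme \<Rightarrow> 'g set \<Rightarrow> 'g set \<Rightarrow> 'g \<Rightarrow> bool" where
  "induces_morphism G A B g \<longleftrightarrow> g \<in> carrier G \<and>
     (\<forall>a\<in>A. inv\<^bsub>G\<^esub> g \<otimes>\<^bsub>G\<^esub> a \<otimes>\<^bsub>G\<^esub> g \<in> B)"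

definition same_morphism :: "('g,'b) monoid_scheme \<Rightarrow> 'g set \<Rightarrow> 'g \<Rightarrow> 'g \<Rightarrow> bool" where
  "same_morphism G A g g' \<longleftrightarrow>
     (\<forall>a\<in>A. inv\<^bsub>G\<^esub> g \<otimes>\<^bsub>G\<^esub> a \<otimes>\<^bsub>G\<^esub> g = inv\<^bsub>G\<^esub> g' \<otimes>\<^bsub>G\<^esub> a \<otimes>\<^bsub>G\<^esub> g')"

end

theory Submission
  imports Defs
begin

text \<open>Write \<open>g' = (w,m')\<close> as \<open>h g\<close> with \<open>g = (w,m)\<close> and \<open>h = (1,d)\<close> an element of \<open>M\<close>, where
  \<open>d\<^sup>w = m' - m\<close>. Conjugation by \<open>g\<close> and by \<open>h g\<close> agree on \<open>A\<close> exactly when \<open>h\<close> centralises \<open>A\<close>;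
  since \<open>A\<close> projects onto \<open>L\<close> and \<open>(1,d)\<close> commutes with \<open>(l,s)\<close> iff \<open>d\<^sup>l = d\<close>, this means
  \<open>d \<in> C\<^sub>M(L)\<close>, i.e. \<open>m - m' = (-d)\<^sup>w \<in> C\<^sub>M(L)\<^sup>w\<close>.\<close>

lemma right_module_act_one: "right_module P act \<Longrightarrow> act m \<one>\<^bsub>P\<^esub> = m"
  unfolding right_module_def by blast

lemma right_module_act_act:
  "right_module P act \<Longrightarrow> g \<in> carrier P \<Longrightarrow> h \<in> carrier P \<Longrightarrow>
     act (act m g) h = act m (g \<otimes>\<^bsub>P\<^esub> h)"
  unfolding right_module_def by blast

lemma right_module_act_add:
  "right_module P act \<Longrightarrow> g \<in> carrier P \<Longrightarrow> act (a + b) g = act a g + act b g"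
  unfolding right_module_def by blast

lemma right_module_act_zero:
  assumes "right_module P act" "g \<in> carrier P"
  shows "act 0 g = 0"
  using right_module_act_add[OF assms, of 0 0] by simp

lemma right_module_act_uminus:
  assumes "right_module P act" "g \<in> carrier P"
  shows "act (- a) g = - act a g"
  using right_module_act_add[OF assms, of a "- a"] right_module_act_zero[OF assms]
  by (simp add: eq_neg_iff_add_eq_0 add.commute)

lemma right_module_act_inv_act:
  assumes "group P" "right_module P act" "w \<in> carrier P"
  shows "act (act m (inv\<^bsub>P\<^esub> w)) w = m"
  using assms by (simp add: right_module_act_act right_module_act_one group.l_inv)

lemma right_module_act_act_inv:
  assumes "group P" "right_module P act" "w \<in> carrier P"
  shows "act (act m w) (inv\<^bsub>P\<^esub> w) = m"
  using assms by (simp add: right_module_act_act right_module_act_one group.r_inv)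

lemma image_act_iff:
  assumes "group P" "right_module P act" "w \<in> carrier P"
  shows "x \<in> (\<lambda>n. act n w) ` S \<longleftrightarrow> act x (inv\<^bsub>P\<^esub> w) \<in> S"
proof
  assume "x \<in> (\<lambda>n. act n w) ` S"
  then show "act x (inv\<^bsub>P\<^esub> w) \<in> S"
    using right_module_act_act_inv[OF assms] by auto
next
  assume "act x (inv\<^bsub>P\<^esub> w) \<in> S"
  then show "x \<in> (\<lambda>n. act n w) ` S"
    using right_module_act_inv_act[OF assms, of x, symmetric] by blast
qed

lemma uminus_mem_centraliser_M_iff:
  assumes "right_module P act" "L \<subseteq> carrier P"
  shows "- d \<in> centraliser_M L act \<longleftrightarrow> d \<in> centraliser_M L act"
  using assms right_module_act_uminus[OF assms(1)]
  by (auto simp: centraliser_M_def bracket_def subset_iff)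

lemma carrier_Ext: "carrier (Ext P act \<tau>) = carrier P \<times> UNIV"
  unfolding Ext_def by simp

lemma one_Ext: "\<one>\<^bsub>Ext P act \<tau>\<^esub> = (\<one>\<^bsub>P\<^esub>, 0)"
  unfolding Ext_def by simp

lemma mult_Ext: "(g,m) \<otimes>\<^bsub>Ext P act \<tau>\<^esub> (h,n) = (g \<otimes>\<^bsub>P\<^esub> h, act m h + n + \<tau> g h)"
  unfolding Ext_def by simp

lemma group_Ext:
  assumes P: "group P" and M: "right_module P act" and \<tau>: "normalised_2cocycle P act \<tau>"
  shows "group (Ext P act \<tau>)"
proof (rule groupI)
  interpret P: group P by (rule P)
  let ?G = "Ext P act \<tau>"
  have \<tau>_one: "\<And>h. h \<in> carrier P \<Longrightarrow> \<tau> \<one>\<^bsub>P\<^esub> h = 0"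
    and \<tau>_cocycle: "\<And>g h k. g \<in> carrier P \<Longrightarrow> h \<in> carrier P \<Longrightarrow> k \<in> carrier P \<Longrightarrow>
        act (\<tau> g h) k + \<tau> (g \<otimes>\<^bsub>P\<^esub> h) k = \<tau> g (h \<otimes>\<^bsub>P\<^esub> k) + \<tau> h k"
    using \<tau> unfolding normalised_2cocycle_def by blast+
  show "x \<otimes>\<^bsub>?G\<^esub> y \<in> carrier ?G" if "x \<in> carrier ?G" "y \<in> carrier ?G" for x y
    using that by (auto simp: carrier_Ext mult_Ext)
  show "\<one>\<^bsub>?G\<^esub> \<in> carrier ?G"
    by (simp add: carrier_Ext one_Ext)
  show "x \<otimes>\<^bsub>?G\<^esub> y \<otimes>\<^bsub>?G\<^esub> z = x \<otimes>\<^bsub>?G\<^esub> (y \<otimes>\<^bsub>?G\<^esub> z)"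
    if xyz_G: "x \<in> carrier ?G" "y \<in> carrier ?G" "z \<in> carrier ?G" for x y z
  proof -
    obtain g m h n k q where xyz: "x = (g,m)" "y = (h,n)" "z = (k,q)"
      and gs: "g \<in> carrier P" "h \<in> carrier P" "k \<in> carrier P"
      using xyz_G by (auto simp: carrier_Ext)
    have "act (act m h + n + \<tau> g h) k + q + \<tau> (g \<otimes>\<^bsub>P\<^esub> h) k
        = act m (h \<otimes>\<^bsub>P\<^esub> k) + act n k + q + (act (\<tau> g h) k + \<tau> (g \<otimes>\<^bsub>P\<^esub> h) k)"
      using gs right_module_act_add[OF M] right_module_act_act[OF M] by (simp add: algebra_simps)
    also have "\<dots> = act m (h \<otimes>\<^bsub>P\<^esub> k) + (act n k + q + \<tau> h k) + \<tau> g (h \<otimes>\<^bsub>P\<^esub> k)"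
      using \<tau>_cocycle[OF gs] by (simp add: algebra_simps)
    finally show ?thesis
      using gs right_module_act_add[OF M] by (simp add: xyz mult_Ext P.m_assoc)
  qed
  show "\<one>\<^bsub>?G\<^esub> \<otimes>\<^bsub>?G\<^esub> x = x" if "x \<in> carrier ?G" for x
    using that right_module_act_zero[OF M] by (auto simp: carrier_Ext one_Ext mult_Ext \<tau>_one)
  show "\<exists>y\<in>carrier ?G. y \<otimes>\<^bsub>?G\<^esub> x = \<one>\<^bsub>?G\<^esub>" if x_G: "x \<in> carrier ?G" for x
  proof -
    obtain g m where x: "x = (g,m)" and g: "g \<in> carrier P"
      using x_G by (auto simp: carrier_Ext)
    define n where "n = act (- m - \<tau> (inv\<^bsub>P\<^esub> g) g) (inv\<^bsub>P\<^esub> g)"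
    have "act n g = - m - \<tau> (inv\<^bsub>P\<^esub> g) g"
      unfolding n_def using g by (simp add: P M right_module_act_inv_act)
    then have "(inv\<^bsub>P\<^esub> g, n) \<otimes>\<^bsub>?G\<^esub> x = \<one>\<^bsub>?G\<^esub>"
      using g by (simp add: x mult_Ext one_Ext)
    moreover have "(inv\<^bsub>P\<^esub> g, n) \<in> carrier ?G"
      using g by (simp add: carrier_Ext)
    ultimately show ?thesis by blast
  qed
qed

lemma Ext_module_elem_commute_iff:
  assumes "group P" "right_module P act" "normalised_2cocycle P act \<tau>" "l \<in> carrier P"
  shows "(\<one>\<^bsub>P\<^esub>, d) \<otimes>\<^bsub>Ext P act \<tau>\<^esub> (l, s) = (l, s) \<otimes>\<^bsub>Ext P act \<tau>\<^esub> (\<one>\<^bsub>P\<^esub>, d)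
    \<longleftrightarrow> act d l = d"
  using assms by (auto simp: mult_Ext normalised_2cocycle_def right_module_act_one add.commute
    group.is_monoid monoid.l_one monoid.r_one)

lemma Ext_module_elem_centralises_iff:
  assumes "group P" "right_module P act" "normalised_2cocycle P act \<tau>"
    "S \<subseteq> carrier (Ext P act \<tau>)"
  shows "(\<forall>a\<in>S. (\<one>\<^bsub>P\<^esub>, d) \<otimes>\<^bsub>Ext P act \<tau>\<^esub> a = a \<otimes>\<^bsub>Ext P act \<tau>\<^esub> (\<one>\<^bsub>P\<^esub>, d))
    \<longleftrightarrow> d \<in> centraliser_M (fst ` S) act"
proof -
  have "fst a \<in> carrier P" if "a \<in> S" for a
    using that assms(4) by (auto simp: carrier_Ext)
  then show ?thesis
    using Ext_module_elem_commute_iff[OF assms(1-3)]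
    by (fastforce simp: centraliser_M_def bracket_def)
qed

lemma fst_C_gamma_embM:
  assumes "group P" "L \<subseteq> carrier P" "Ob \<noteq> {}"
  shows "fst ` (C_gamma L t \<gamma> <#>\<^bsub>Ext P act \<tau>\<^esub> embM P Ob) = L"
  using assms
  by (force simp: set_mult_def C_gamma_def embM_def mult_Ext group.is_monoid monoid.r_one subset_iff image_iff)

lemma conj_eq_conj_mult_left_iff:
  fixes G (structure)
  assumes "group G" "g \<in> carrier G" "h \<in> carrier G" "a \<in> carrier G"
  shows "inv\<^bsub>G\<^esub> g \<otimes>\<^bsub>G\<^esub> a \<otimes>\<^bsub>G\<^esub> g = inv\<^bsub>G\<^esub> (h \<otimes>\<^bsub>G\<^esub> g) \<otimes>\<^bsub>G\<^esub> a \<otimes>\<^bsub>G\<^esub> (h \<otimes>\<^bsub>G\<^esub> g)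
     \<longleftrightarrow> h \<otimes>\<^bsub>G\<^esub> a = a \<otimes>\<^bsub>G\<^esub> h"
proof -
  interpret group G by fact
  have "inv (h \<otimes> g) \<otimes> a \<otimes> (h \<otimes> g) = inv g \<otimes> (inv h \<otimes> a \<otimes> h) \<otimes> g"
    using assms by (simp add: inv_mult_group m_assoc)
  moreover have "inv g \<otimes> a \<otimes> g = inv g \<otimes> y \<otimes> g \<longleftrightarrow> a = y" if "y \<in> carrier G" for y
    using assms that by (simp add: m_assoc)
  ultimately have "inv g \<otimes> a \<otimes> g = inv (h \<otimes> g) \<otimes> a \<otimes> (h \<otimes> g) \<longleftrightarrow> a = inv h \<otimes> a \<otimes> h"
    using assms by simp
  also have "\<dots> \<longleftrightarrow> h \<otimes> a = a \<otimes> h"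
  proof
    assume "a = inv h \<otimes> a \<otimes> h"
    then have "h \<otimes> a = h \<otimes> (inv h \<otimes> a \<otimes> h)" by simp
    then show "h \<otimes> a = a \<otimes> h" using assms by (simp add: m_assoc[symmetric])
  next
    assume "h \<otimes> a = a \<otimes> h"
    then have "inv h \<otimes> a \<otimes> h = inv h \<otimes> (h \<otimes> a)" using assms by (simp add: m_assoc)
    then show "a = inv h \<otimes> a \<otimes> h" using assms by (simp add: m_assoc[symmetric])
  qed
  finally show ?thesis .
qed

lemma same_morphism_mult_left_iff:
  assumes "group G" "g \<in> carrier G" "h \<in> carrier G" "A \<subseteq> carrier G"
  shows "same_morphism G A g (h \<otimes>\<^bsub>G\<^esub> g) \<longleftrightarrow> (\<forall>a\<in>A. h \<otimes>\<^bsub>G\<^esub> a = a \<otimes>\<^bsub>G\<^esub> h)"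
  using conj_eq_conj_mult_left_iff[OF assms(1-3)] assms(4)
  unfolding same_morphism_def by blast

theorem lemma5p7:
  fixes p :: nat and P :: "('p,'a) monoid_scheme"
    and act :: "'m::{ab_group_add,finite} \<Rightarrow> 'p \<Rightarrow> 'm"
    and \<tau> :: "'p \<Rightarrow> 'p \<Rightarrow> 'm"
    and L :: "'p set" and t \<gamma> :: "'p \<Rightarrow> 'm" and Ob :: "'m set"
    and B :: "('p \<times> 'm) set" and w :: 'p and m m' :: 'm
  assumes "Factorial_Ring.prime p"
    and "group P" and "finite (carrier P)" and "\<exists>k. card (carrier P) = p ^ k"
    and "\<exists>j. card (UNIV::'m set) = p ^ j"
    and "right_module P act"
    and "normalised_2cocycle P act \<tau>"
    and "elem_ab_subgroup p P L"
    and "subgroup (C_gamma L t (\<lambda>_. 0)) (Ext P act \<tau>)"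
    and "normalised_1cocycle P L act \<gamma>"
    and "Ob \<in> calO p L act"
    and "quillen_obj p (Ext P act \<tau>) (C_gamma L t \<gamma> <#>\<^bsub>Ext P act \<tau>\<^esub> embM P Ob)"
    and "quillen_obj p (Ext P act \<tau>) B"
    and "induces_morphism (Ext P act \<tau>) (C_gamma L t \<gamma> <#>\<^bsub>Ext P act \<tau>\<^esub> embM P Ob) B (w, m)"
    and "induces_morphism (Ext P act \<tau>) (C_gamma L t \<gamma> <#>\<^bsub>Ext P act \<tau>\<^esub> embM P Ob) B (w, m')"
  shows "same_morphism (Ext P act \<tau>) (C_gamma L t \<gamma> <#>\<^bsub>Ext P act \<tau>\<^esub> embM P Ob) (w, m) (w, m')
     \<longleftrightarrow> m - m' \<in> (\<lambda>n. act n w) ` centraliser_M L act"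
proof -
  let ?G = "Ext P act \<tau>"
  let ?A = "C_gamma L t \<gamma> <#>\<^bsub>?G\<^esub> embM P Ob"
  have w: "w \<in> carrier P"
    using assms(14) by (simp add: induces_morphism_def carrier_Ext)
  have L: "L \<subseteq> carrier P"
    using assms(8) by (simp add: elem_ab_subgroup_def subgroup.subset)
  have A: "?A \<subseteq> carrier ?G"
    using assms(12) by (simp add: quillen_obj_def elem_ab_subgroup_def subgroup.subset)
  have "Ob \<noteq> {}"
    using assms(11) by (auto simp: calO_def elem_ab_add_def)
  then have fst_A: "fst ` ?A = L"
    using fst_C_gamma_embM[OF assms(2) L] by blast
  define d where "d = act (m' - m) (inv\<^bsub>P\<^esub> w)"
  have g': "(w, m') = (\<one>\<^bsub>P\<^esub>, d) \<otimes>\<^bsub>?G\<^esub> (w, m)"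
    using w assms(7) right_module_act_inv_act[OF assms(2,6) w]
    by (simp add: d_def mult_Ext normalised_2cocycle_def assms(2) group.is_monoid monoid.l_one)
  have "same_morphism ?G ?A (w, m) (w, m')
      \<longleftrightarrow> (\<forall>a\<in>?A. (\<one>\<^bsub>P\<^esub>, d) \<otimes>\<^bsub>?G\<^esub> a = a \<otimes>\<^bsub>?G\<^esub> (\<one>\<^bsub>P\<^esub>, d))"
    unfolding g' using w
    by (intro same_morphism_mult_left_iff group_Ext assms(2,6,7) A) (simp_all add: carrier_Ext assms(2) group.is_monoid monoid.one_closed)
  also have "\<dots> \<longleftrightarrow> - d \<in> centraliser_M L act"
    using Ext_module_elem_centralises_iff[OF assms(2,6,7) A] fst_A
      uminus_mem_centraliser_M_iff[OF assms(6) L] by simp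
  also have "\<dots> \<longleftrightarrow> m - m' \<in> (\<lambda>n. act n w) ` centraliser_M L act"
  proof -
    have "act (m - m') (inv\<^bsub>P\<^esub> w) = - d"
      using right_module_act_uminus[OF assms(6), of "inv\<^bsub>P\<^esub> w" "m' - m"] w
      by (simp add: d_def assms(2) group.inv_closed)
    then show ?thesis
      using image_act_iff[OF assms(2,6) w] by simp
  qed
  finally show ?thesis .
qed

end
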